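(* For every $T\in\mathcal M_{\mathcal G,\Gamma}$, the map $U\mapsto U^{-1}TU$ from $\mathcal A$ (with the weak topology) to $\mathcal M_{\mathcal G,\Gamma}$ (with the topology of the metric $\mathrm m_{\mathcal G,\Gamma}$) is continuous.
   Context: $(X,\Sigma,\mu)$ is a separable Lebesgue space with a non-atomic probability measure $\mu$. $\mathcal A$ is the group of invertible measure-preserving transformations of $X$, two transformations being identified if they agree outside a null set. Fix a countable family $\{A_i\}_{i\in\mathbb N}\subset\Sigma$ that generates $\Sigma$ and is dense in $\Sigma$ (for every $A\in\Sigma$ and $\varepsilon>0$ there is $i$ with $\mu(A_i\triangle A)<\varepsilon$). For $T,S\in\mathcal A$ put $\mathrm d(T,S)=\sum_{i}2^{-i}\big(\mu(TA_i\triangle SA_i)+\mu(T^{-1}A_i\triangle S^{-1}A_i)\big)$ and $\mathrm a(T,S)=\sum_{i,j}2^{-(i+j)}|\mu(TA_i\cap A_j)-\mu(SA_i\cap A_j)|$; the weak topology on $\mathcal A$ is the topology of $\mathrm d$. $\mathcal G$ is a Hausdorff locally compact group with a countable neighborhood base. Fix an at most countable family $\{K_i\}$ of compact subsets of $\mathcal G$ with nonempty interiors whose union contains a set generating $\mathcal G$. An action of $\mathcal G$ is a family $T=\{T^g\}_{g\in\mathcal G}\subset\mathcal A$ with $T^gT^h=T^{gh}$ for all $g,h$ and such that $g\mapsto\mu(T^gA\cap B)$ is continuous for all $A,B\in\Sigma$. For $U\in\mathcal A$ and an action $T$, $U^{-1}TU$ denotes the action $g\mapsto U^{-1}T^gU$.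 $\mathrm d_{\mathcal G}(T,S)=\sum_i 2^{-i}\sup_{g\in K_i}\mathrm d(T^g,S^g)$. Let $\Gamma\subset\mathcal G$ be an unbounded subset (not contained in any compact set). An action $T$ is $\Gamma$-mixing if for all $A,B\in\Sigma$ and $\varepsilon>0$ there is a compact $C\subset\mathcal G$ with $|\mu(T^gA\cap B)-\mu(A)\mu(B)|<\varepsilon$ for all $g\in\Gamma\setminus C$. $\mathcal M_{\mathcal G,\Gamma}$ is the set of all $\Gamma$-mixing actions with the leash metric $\mathrm m_{\mathcal G,\Gamma}(T,S)=\mathrm d_{\mathcal G}(T,S)+\sup_{g\in\Gamma}\mathrm a(T^g,S^g)$. *)

theory Defs
  imports "HOL-Probability.Probability"
begin

definition atomless :: "'a measure \<Rightarrow> bool" where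
  "atomless M \<longleftrightarrow> (\<forall>A\<in>sets M. measure M A > 0 \<longrightarrow>
      (\<exists>B\<in>sets M. B \<subseteq> A \<and> 0 < measure M B \<and> measure M B < measure M A))"

definition generating_dense_family :: "'a measure \<Rightarrow> (nat \<Rightarrow> 'a set) \<Rightarrow> bool" where
  "generating_dense_family M Af \<longleftrightarrow>
     range Af \<subseteq> sets M \<and>
     (\<forall>B\<in>sets M. \<exists>C\<in>sigma_sets (space M) (range Af). B \<subseteq> space M \<and>
         measure M ((B - C) \<union> (C - B)) = 0 \<and> (B - C) \<union> (C - B) \<in> sets M) \<and>
     (\<forall>B\<in>sets M. \<forall>e>0. \<exists>i. measure M ((Af i - B) \<union> (B - Af i)) < e)"

definition meas_pres :: "'a measure \<Rightarrow> ('a \<Rightarrow> 'a) \<Rightarrow> bool" where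
  "meas_pres M T \<longleftrightarrow> T \<in> measurable M M \<and> distr M M T = M"

definition aut :: "'a measure \<Rightarrow> ('a \<Rightarrow> 'a) \<Rightarrow> bool" where
  "aut M T \<longleftrightarrow> bij_betw T (space M) (space M) \<and> meas_pres M T \<and>
      meas_pres M (the_inv_into (space M) T)"

definition ainv :: "'a measure \<Rightarrow> ('a \<Rightarrow> 'a) \<Rightarrow> ('a \<Rightarrow> 'a)" where
  "ainv M T = the_inv_into (space M) T"

definition symd :: "'a set \<Rightarrow> 'a set \<Rightarrow> 'a set" where
  "symd A B = (A - B) \<union> (B - A)"

definition dW :: "'a measure \<Rightarrow> (nat \<Rightarrow> 'a set) \<Rightarrow> ('a \<Rightarrow> 'a) \<Rightarrow> ('a \<Rightarrow> 'a) \<Rightarrow> real" where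
  "dW M Af T S = (\<Sum>i. (1/2)^i * (measure M (symd (T ` Af i) (S ` Af i))
      + measure M (symd (ainv M T ` Af i) (ainv M S ` Af i))))"

definition aW :: "'a measure \<Rightarrow> (nat \<Rightarrow> 'a set) \<Rightarrow> ('a \<Rightarrow> 'a) \<Rightarrow> ('a \<Rightarrow> 'a) \<Rightarrow> real" where
  "aW M Af T S = (\<Sum>i. \<Sum>j. (1/2)^(i+j) *
      \<bar>measure M (T ` Af i \<inter> Af j) - measure M (S ` Af i \<inter> Af j)\<bar>)"

inductive_set gen_subgroup :: "'g::group_add set \<Rightarrow> 'g set" for S where
  gen_zero: "0 \<in> gen_subgroup S"
| gen_base: "s \<in> S \<Longrightarrow> s \<in> gen_subgroup S"
| gen_add: "a \<in> gen_subgroup S \<Longrightarrow> b \<in> gen_subgroup S \<Longrightarrow> a + b \<in> gen_subgroup S"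
| gen_uminus: "a \<in> gen_subgroup S \<Longrightarrow> - a \<in> gen_subgroup S"

definition admissible_compacts :: "nat set \<Rightarrow> (nat \<Rightarrow> 'g::{topological_group_add} set) \<Rightarrow> bool" where
  "admissible_compacts I K \<longleftrightarrow> (\<forall>i\<in>I. compact (K i) \<and> interior (K i) \<noteq> {}) \<and>
     (\<exists>S. S \<subseteq> (\<Union>i\<in>I. K i) \<and> gen_subgroup S = UNIV)"

definition is_action :: "'a measure \<Rightarrow> ('g::topological_group_add \<Rightarrow> 'a \<Rightarrow> 'a) \<Rightarrow> bool" where
  "is_action M T \<longleftrightarrow> (\<forall>g. aut M (T g)) \<and>
     (\<forall>g h. AE x in M. T g (T h x) = T (g + h) x) \<and>
     (\<forall>A\<in>sets M. \<forall>B\<in>sets M. continuous_on UNIV (\<lambda>g. measure M (T g ` A \<inter> B)))"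

definition conj_action :: "'a measure \<Rightarrow> ('a \<Rightarrow> 'a) \<Rightarrow> ('g \<Rightarrow> 'a \<Rightarrow> 'a) \<Rightarrow> ('g \<Rightarrow> 'a \<Rightarrow> 'a)" where
  "conj_action M U T = (\<lambda>g. ainv M U \<circ> T g \<circ> U)"

definition dG :: "'a measure \<Rightarrow> (nat \<Rightarrow> 'a set) \<Rightarrow> nat set \<Rightarrow> (nat \<Rightarrow> 'g set)
    \<Rightarrow> ('g \<Rightarrow> 'a \<Rightarrow> 'a) \<Rightarrow> ('g \<Rightarrow> 'a \<Rightarrow> 'a) \<Rightarrow> real" where
  "dG M Af I K T S = (\<Sum>i. if i \<in> I then (1/2)^i * (SUP g\<in>K i. dW M Af (T g) (S g)) else 0)"

definition mixing :: "'a measure \<Rightarrow> 'g::topological_group_add set \<Rightarrow> ('g \<Rightarrow> 'a \<Rightarrow> 'a) \<Rightarrow> bool" where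
  "mixing M \<Gamma> T \<longleftrightarrow> (\<forall>A\<in>sets M. \<forall>B\<in>sets M. \<forall>e>0. \<exists>C. compact C \<and>
      (\<forall>g\<in>\<Gamma> - C. \<bar>measure M (T g ` A \<inter> B) - measure M A * measure M B\<bar> < e))"

definition mixing_actions :: "'a measure \<Rightarrow> 'g::topological_group_add set \<Rightarrow> ('g \<Rightarrow> 'a \<Rightarrow> 'a) set" where
  "mixing_actions M \<Gamma> = {T. is_action M T \<and> mixing M \<Gamma> T}"

definition leash :: "'a measure \<Rightarrow> (nat \<Rightarrow> 'a set) \<Rightarrow> nat set \<Rightarrow> (nat \<Rightarrow> 'g set) \<Rightarrow> 'g set
    \<Rightarrow> ('g \<Rightarrow> 'a \<Rightarrow> 'a) \<Rightarrow> ('g \<Rightarrow> 'a \<Rightarrow> 'a) \<Rightarrow> real" where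
  "leash M Af I K \<Gamma> T S = dG M Af I K T S + (SUP g\<in>\<Gamma>. aW M Af (T g) (S g))"

end

theory Submission
  imports Defs
begin

text \<open>
  Conjugation by \<open>U\<close> preserves mixing because \<open>U\<close> is measure preserving:
  \<open>\<mu>(U\<inverse>T\<^sup>gU A \<inter> B) = \<mu>(T\<^sup>g UA \<inter> UB)\<close>.
  For continuity, the \<open>a\<close>-part of the leash metric is even Lipschitz in \<open>U\<close>, uniformly in \<open>g\<close>,
  since \<open>|\<mu>(T\<^sup>g UA\<^sub>i \<inter> UA\<^sub>j) - \<mu>(T\<^sup>g VA\<^sub>i \<inter> VA\<^sub>j)| \<le> \<mu>(UA\<^sub>i \<triangle> VA\<^sub>i) + \<mu>(UA\<^sub>j \<triangle> VA\<^sub>j)\<close>.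
  In the \<open>d\<^sub>\<G>\<close>-part only finitely many \<open>K\<^sub>i\<close> and \<open>A\<^sub>j\<close> matter up to a small error.
  On a compact \<open>K\<close> the sets \<open>T\<^sup>g UA\<^sub>j\<close> and \<open>(T\<^sup>g)\<inverse> UA\<^sub>j\<close>, \<open>g \<in> K\<close>, form a totally bounded
  family (\<open>g \<mapsto> T\<^sup>g\<close> is weakly continuous), so they are uniformly approximated by finitely
  many \<open>A\<^sub>k\<close>, and each of these is moved little by \<open>V\<inverse>\<close> when \<open>V\<close> is close to \<open>U\<close>.
\<close>

section \<open>Series with weights \<open>2\<^sup>-\<^sup>i\<close>\<close>

lemma summable_weighted_halves:
  fixes f :: "nat \<Rightarrow> real"
  assumes "\<And>i. 0 \<le> f i" "\<And>i. f i \<le> c"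
  shows "summable (\<lambda>i. (1/2)^i * f i)"
proof (rule summable_comparison_test')
  show "summable (\<lambda>i. (1/2::real)^i * c)" by (intro summable_mult2 summable_geometric) auto
qed (use assms in \<open>auto intro!: mult_left_mono\<close>)

lemma weighted_halves_le_suminf:
  fixes f :: "nat \<Rightarrow> real"
  assumes "\<And>i. 0 \<le> f i" "\<And>i. f i \<le> c"
  shows "(1/2)^k * f k \<le> (\<Sum>i. (1/2)^i * f i)"
  using sum_le_suminf[OF summable_weighted_halves[OF assms], of "{k}"] assms by auto

lemma suminf_weighted_halves_le:
  fixes f :: "nat \<Rightarrow> real"
  assumes "\<And>i. 0 \<le> f i" "\<And>i. f i \<le> c"
  shows "(\<Sum>i. (1/2)^i * f i) \<le> 2 * c"
proof -
  have "(\<Sum>i. (1/2)^i * f i) \<le> (\<Sum>i. (1/2::real)^i * c)"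
    by (intro suminf_le summable_weighted_halves[OF assms] summable_mult2 summable_geometric)
       (use assms in \<open>auto intro!: mult_left_mono\<close>)
  also have "\<dots> = 2 * c" using suminf_geometric[of "1/2::real"] by (simp add: suminf_mult2[symmetric])
  finally show ?thesis .
qed

lemma suminf_weighted_halves_nonneg:
  fixes f :: "nat \<Rightarrow> real"
  assumes "\<And>i. 0 \<le> f i" "\<And>i. f i \<le> c"
  shows "0 \<le> (\<Sum>i. (1/2)^i * f i)"
  by (intro suminf_nonneg summable_weighted_halves[OF assms]) (use assms in auto)

lemma suminf_weighted_halves_le_initial:
  fixes f :: "nat \<Rightarrow> real"
  assumes "\<And>i. 0 \<le> f i" "\<And>i. f i \<le> c" "\<And>i. i < J \<Longrightarrow> f i \<le> a" "0 \<le> a"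
  shows "(\<Sum>i. (1/2)^i * f i) \<le> 2 * a + 2 * c * (1/2)^J"
proof -
  have "(\<Sum>i. (1/2)^i * f i) = (\<Sum>n. (1/2)^(n+J) * f (n+J)) + (\<Sum>i<J. (1/2)^i * f i)"
    by (rule suminf_split_initial_segment[OF summable_weighted_halves[OF assms(1,2)]])
  also have "(\<Sum>n. (1/2::real)^(n+J) * f (n+J)) = (1/2)^J * (\<Sum>n. (1/2)^n * f (n+J))"
    by (subst suminf_mult[symmetric])
       (use summable_weighted_halves[of "\<lambda>n. f (n+J)"] assms in \<open>auto simp: power_add algebra_simps\<close>)
  also have "\<dots> \<le> (1/2)^J * (2 * c)"
    by (intro mult_left_mono suminf_weighted_halves_le) (use assms in auto)
  also have "(\<Sum>i<J. (1/2::real)^i * f i) \<le> (\<Sum>i<J. (1/2)^i * a)"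
    by (intro sum_mono mult_left_mono) (use assms in auto)
  also have "\<dots> \<le> (\<Sum>i. (1/2)^i * a)"
    by (intro sum_le_suminf summable_weighted_halves[of "\<lambda>_. a" a]) (use assms in auto)
  also have "\<dots> \<le> 2 * a" using suminf_weighted_halves_le[of "\<lambda>_. a" a] assms by auto
  finally show ?thesis by (simp add: algebra_simps)
qed

lemma double_suminf_weighted_halves_le:
  fixes x :: "nat \<Rightarrow> nat \<Rightarrow> real"
  assumes x: "\<And>i j. 0 \<le> x i j" "\<And>i j. x i j \<le> a i + a j" and a: "\<And>i. 0 \<le> a i" "\<And>i. a i \<le> 1"
  shows "(\<Sum>i. \<Sum>j. (1/2)^(i+j) * x i j) \<le> 4 * (\<Sum>i. (1/2)^i * a i)"
proof -
  define D where "D = (\<Sum>i. (1/2::real)^i * a i)"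
  have sa: "summable (\<lambda>i. (1/2::real)^i * a i)" using summable_weighted_halves a by blast
  have geom: "summable (\<lambda>i. (1/2::real)^i)" "(\<Sum>i. (1/2::real)^i) = 2"
    using suminf_geometric[of "1/2::real"] summable_geometric[of "1/2::real"] by auto
  have x2: "x i j \<le> 2" for i j using x(2)[of i j] a(2)[of i] a(2)[of j] by linarith
  have sx: "summable (\<lambda>j. (1/2::real)^j * x i j)" for i
    using summable_weighted_halves[of "x i" 2] x(1) x2 by blast
  have row_eq: "(\<Sum>j. (1/2::real)^(i+j) * x i j) = (1/2)^i * (\<Sum>j. (1/2)^j * x i j)" for i
    by (subst suminf_mult[symmetric]) (use sx in \<open>auto simp: power_add algebra_simps\<close>)
  have row_le: "(\<Sum>j. (1/2)^(i+j) * x i j) \<le> (1/2)^i * (2 * a i + D)" for i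
  proof -
    have "(\<Sum>j. (1/2::real)^j * x i j) \<le> (\<Sum>j. (1/2)^j * (a i + a j))"
      by (intro suminf_le sx summable_weighted_halves[of _ 2] mult_left_mono x)
         (use a add_mono[OF a(2) a(2)] in auto)
    also have "\<dots> = (\<Sum>j. a i * (1/2)^j + (1/2)^j * a j)"
      by (simp add: algebra_simps)
    also have "\<dots> = 2 * a i + D"
      unfolding D_def using suminf_mult[OF geom(1), of "a i"] geom(2)
      by (subst suminf_add[symmetric]) (auto intro!: summable_mult geom sa)
    finally show ?thesis unfolding row_eq by (simp add: mult_left_mono)
  qed
  have row_nonneg: "0 \<le> (\<Sum>j. (1/2::real)^(i+j) * x i j)" for i
    unfolding row_eq by (intro mult_nonneg_nonneg suminf_nonneg sx) (use x in auto)
  have split: "(\<lambda>i. (1/2::real)^i * (2 * a i + D)) = (\<lambda>i. 2 * ((1/2)^i * a i) + D * (1/2)^i)"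
    by (simp add: algebra_simps)
  have sD: "summable (\<lambda>i. (1/2::real)^i * (2 * a i + D))"
    unfolding split by (intro summable_add summable_mult sa geom)
  have "(\<Sum>i. \<Sum>j. (1/2)^(i+j) * x i j) \<le> (\<Sum>i. (1/2::real)^i * (2 * a i + D))"
    by (intro suminf_le row_le sD summable_comparison_test'[OF sD]) (use row_le row_nonneg in auto)
  also have "\<dots> = 4 * D"
    unfolding split using suminf_mult[OF sa, of 2] suminf_mult[OF geom(1), of D] geom(2)
    by (subst suminf_add[symmetric]) (auto intro!: summable_mult sa geom simp: D_def)
  finally show ?thesis unfolding D_def .
qed

lemma finite_ball_ex_delta:
  fixes d :: "'b \<Rightarrow> real"
  assumes "finite F" "\<forall>x\<in>F. \<exists>\<delta>>0. \<forall>y. Q y \<and> d y < \<delta> \<longrightarrow> P x y"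
  shows "\<exists>\<delta>>0. \<forall>y. Q y \<and> d y < \<delta> \<longrightarrow> (\<forall>x\<in>F. P x y)"
  using assms
proof (induction F rule: finite_induct)
  case empty
  show ?case by (auto intro: exI[of _ 1])
next
  case (insert x F)
  obtain \<delta>1 where "\<delta>1 > 0" "\<forall>y. Q y \<and> d y < \<delta>1 \<longrightarrow> P x y" using insert.prems by blast
  moreover obtain \<delta>2 where "\<delta>2 > 0" "\<forall>y. Q y \<and> d y < \<delta>2 \<longrightarrow> (\<forall>x\<in>F. P x y)"
    using insert by blast
  ultimately show ?case by (intro exI[of _ "min \<delta>1 \<delta>2"]) auto
qed

section \<open>Measure-preserving bijections\<close>

text \<open>The image-based counterpart of \<open>meas_pres\<close>, matching the way \<open>dW\<close> and \<open>aW\<close> are defined.\<close>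

definition mp_bij :: "'a measure \<Rightarrow> ('a \<Rightarrow> 'a) \<Rightarrow> bool" where
  "mp_bij M W \<longleftrightarrow> bij_betw W (space M) (space M) \<and>
     (\<forall>A\<in>sets M. W ` A \<in> sets M \<and> measure M (W ` A) = measure M A)"

lemma symd_commute: "symd A B = symd B A"
  unfolding symd_def by auto

context prob_space
begin

abbreviation mdist :: "'a set \<Rightarrow> 'a set \<Rightarrow> real" where
  "mdist A B \<equiv> measure M (symd A B)"

lemma symd_in_sets: "A \<in> sets M \<Longrightarrow> B \<in> sets M \<Longrightarrow> symd A B \<in> sets M"
  unfolding symd_def by auto

lemma measure_symd:
  assumes "A \<in> sets M" "B \<in> sets M"
  shows "mdist A B = measure M A + measure M B - 2 * measure M (A \<inter> B)"
proof -
  have "mdist A B = measure M (A - B) + measure M (B - A)"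
    unfolding symd_def using assms by (intro finite_measure_Union) auto
  then show ?thesis
    using assms by (simp add: finite_measure_Diff' Int_commute)
qed

lemma measure_symd_triangle:
  assumes "A \<in> sets M" "B \<in> sets M" "C \<in> sets M"
  shows "mdist A C \<le> mdist A B + mdist B C"
proof -
  have "mdist A C \<le> measure M (symd A B \<union> symd B C)"
    using assms by (intro finite_measure_mono) (auto simp: symd_def)
  also have "\<dots> \<le> mdist A B + mdist B C"
    using assms by (intro measure_Un_le symd_in_sets)
  finally show ?thesis .
qed

lemma abs_measure_diff_le_symd:
  assumes "A \<in> sets M" "B \<in> sets M"
  shows "\<bar>measure M A - measure M B\<bar> \<le> mdist A B"
proof -
  have "measure M A \<le> measure M (B \<union> symd A B)" "measure M B \<le> measure M (A \<union> symd A B)"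
    using assms by (intro finite_measure_mono; auto simp: symd_def)+
  moreover have "measure M (B \<union> symd A B) \<le> measure M B + mdist A B"
    "measure M (A \<union> symd A B) \<le> measure M A + mdist A B"
    using assms by (intro measure_Un_le symd_in_sets; simp)+
  ultimately show ?thesis by linarith
qed

lemma abs_measure_Int_diff_le_symd:
  assumes "X \<in> sets M" "Y \<in> sets M" "Z \<in> sets M" "W \<in> sets M"
  shows "\<bar>measure M (X \<inter> Z) - measure M (Y \<inter> W)\<bar> \<le> mdist X Y + mdist Z W"
proof -
  have "\<bar>measure M (X \<inter> Z) - measure M (Y \<inter> W)\<bar> \<le> mdist (X \<inter> Z) (Y \<inter> W)"
    using assms by (intro abs_measure_diff_le_symd) auto
  also have "\<dots> \<le> measure M (symd X Y \<union> symd Z W)"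
    using assms by (intro finite_measure_mono) (auto simp: symd_def)
  also have "\<dots> \<le> mdist X Y + mdist Z W"
    using assms by (intro measure_Un_le symd_in_sets)
  finally show ?thesis .
qed

lemma mp_bij_sets: "mp_bij M W \<Longrightarrow> A \<in> sets M \<Longrightarrow> W ` A \<in> sets M"
  unfolding mp_bij_def by auto

lemma mp_bij_measure: "mp_bij M W \<Longrightarrow> A \<in> sets M \<Longrightarrow> measure M (W ` A) = measure M A"
  unfolding mp_bij_def by auto

lemma mp_bij_bij_betw: "mp_bij M W \<Longrightarrow> bij_betw W (space M) (space M)"
  unfolding mp_bij_def by auto

lemma mp_bij_measure_Int:
  assumes "mp_bij M W" "A \<in> sets M" "B \<in> sets M"
  shows "measure M (W ` A \<inter> W ` B) = measure M (A \<inter> B)"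
proof -
  have "W ` (A \<inter> B) = W ` A \<inter> W ` B"
    using assms sets.sets_into_space mp_bij_bij_betw[OF assms(1)]
    by (intro inj_on_image_Int) (auto simp: bij_betw_def)
  then show ?thesis using mp_bij_measure[OF assms(1)] assms by (metis sets.Int)
qed

lemma mp_bij_measure_symd:
  assumes "mp_bij M W" "A \<in> sets M" "B \<in> sets M"
  shows "mdist (W ` A) (W ` B) = mdist A B"
  using mp_bij_measure_Int[OF assms] mp_bij_measure[OF assms(1)] assms
    measure_symd[OF assms(2,3)] measure_symd[OF mp_bij_sets[OF assms(1,2)] mp_bij_sets[OF assms(1,3)]]
  by simp

lemma mp_bij_comp: "mp_bij M W \<Longrightarrow> mp_bij M V \<Longrightarrow> mp_bij M (W \<circ> V)"
  unfolding mp_bij_def by (auto simp: image_comp[symmetric] intro: bij_betw_trans) (metis image_image)+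

lemma mp_bij_cong:
  assumes "mp_bij M W" "\<And>x. x \<in> space M \<Longrightarrow> W x = V x"
  shows "mp_bij M V"
proof -
  have "bij_betw V (space M) (space M)"
    using assms bij_betw_cong unfolding mp_bij_def by blast
  moreover have "V ` A = W ` A" if "A \<in> sets M" for A
    using assms(2) sets.sets_into_space[OF that] by (metis image_cong subsetD)
  ultimately show ?thesis using assms(1) unfolding mp_bij_def by auto
qed

lemma ainv_right: "bij_betw W (space M) (space M) \<Longrightarrow> x \<in> space M \<Longrightarrow> W (ainv M W x) = x"
  unfolding ainv_def by (rule f_the_inv_into_f_bij_betw)

lemma ainv_left: "bij_betw W (space M) (space M) \<Longrightarrow> x \<in> space M \<Longrightarrow> ainv M W (W x) = x"
  unfolding ainv_def bij_betw_def by (auto intro: the_inv_into_f_f)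

lemma ainv_in_space: "bij_betw W (space M) (space M) \<Longrightarrow> x \<in> space M \<Longrightarrow> ainv M W x \<in> space M"
  unfolding ainv_def using bij_betw_the_inv_into bij_betw_apply by fastforce

lemma vimage_ainv:
  assumes "bij_betw W (space M) (space M)" "A \<subseteq> space M"
  shows "ainv M W -` A \<inter> space M = W ` A"
proof
  show "ainv M W -` A \<inter> space M \<subseteq> W ` A"
    using ainv_right[OF assms(1)] by (metis IntE image_eqI subsetI vimageE)
  show "W ` A \<subseteq> ainv M W -` A \<inter> space M"
    using assms ainv_left[OF assms(1)] bij_betw_apply[OF assms(1)] by auto
qed

lemma image_ainv:
  assumes "bij_betw W (space M) (space M)" "A \<subseteq> space M"
  shows "ainv M W ` A = W -` A \<inter> space M"
proof
  show "W -` A \<inter> space M \<subseteq> ainv M W ` A"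
    using ainv_left[OF assms(1)] by (metis IntE image_eqI subsetI vimageE)
  show "ainv M W ` A \<subseteq> W -` A \<inter> space M"
    using assms ainv_right[OF assms(1)] ainv_in_space[OF assms(1)] by auto
qed

lemma image_image_ainv: "mp_bij M W \<Longrightarrow> A \<subseteq> space M \<Longrightarrow> W ` ainv M W ` A = A"
  using ainv_right[OF mp_bij_bij_betw] by (force simp: image_image)

lemma meas_pres_vimage:
  assumes "meas_pres M f" "A \<in> sets M"
  shows "f -` A \<inter> space M \<in> sets M" "measure M (f -` A \<inter> space M) = measure M A"
proof -
  show "f -` A \<inter> space M \<in> sets M" using assms unfolding meas_pres_def by auto
  have "emeasure M (f -` A \<inter> space M) = emeasure (distr M M f) A"
    using assms unfolding meas_pres_def by (intro emeasure_distr[symmetric]) auto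
  then show "measure M (f -` A \<inter> space M) = measure M A"
    using assms unfolding meas_pres_def by (simp add: measure_def)
qed

lemma aut_imp_mp_bij:
  assumes "aut M U"
  shows "mp_bij M U" "mp_bij M (ainv M U)"
proof -
  have b: "bij_betw U (space M) (space M)" using assms unfolding aut_def by auto
  have mp: "meas_pres M (ainv M U)" "meas_pres M U" using assms unfolding aut_def ainv_def by auto
  show "mp_bij M U" unfolding mp_bij_def
    using b meas_pres_vimage[OF mp(1)] vimage_ainv[OF b] sets.sets_into_space by metis
  show "mp_bij M (ainv M U)" unfolding mp_bij_def
    using b meas_pres_vimage[OF mp(2)] image_ainv[OF b] sets.sets_into_space
      bij_betw_the_inv_into[OF b] unfolding ainv_def by metis
qed

lemma mp_bij_imp_meas_pres:
  assumes "mp_bij M W" "mp_bij M (ainv M W)"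
  shows "meas_pres M W"
proof -
  have b: "bij_betw W (space M) (space M)" using assms(1) by (rule mp_bij_bij_betw)
  have vim: "W -` A \<inter> space M \<in> sets M \<and> measure M (W -` A \<inter> space M) = measure M A"
    if "A \<in> sets M" for A
    using image_ainv[OF b sets.sets_into_space[OF that]] assms(2) that unfolding mp_bij_def by auto
  have meas: "W \<in> M \<rightarrow>\<^sub>M M"
    unfolding measurable_def using b vim unfolding bij_betw_def by auto
  have "distr M M W = M"
    by (rule measure_eqI) (auto simp: emeasure_distr[OF meas] emeasure_eq_measure vim)
  then show ?thesis using meas unfolding meas_pres_def by auto
qed

lemma mp_bij_imp_aut:
  assumes "mp_bij M W" "mp_bij M (ainv M W)"
  shows "aut M W"
proof -
  have b: "bij_betw W (space M) (space M)" using assms(1) by (rule mp_bij_bij_betw)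
  have "ainv M (ainv M W) x = W x" if "x \<in> space M" for x
    unfolding ainv_def using b that
    by (metis bij_betw_def bij_betw_the_inv_into the_inv_into_f_eq the_inv_into_f_f imageI)
  then have "mp_bij M (ainv M (ainv M W))" using assms(1) mp_bij_cong by metis
  then have "meas_pres M (ainv M W)" using mp_bij_imp_meas_pres assms(2) by blast
  then show ?thesis using mp_bij_imp_meas_pres[OF assms] b unfolding aut_def ainv_def by auto
qed

section \<open>Conjugate actions\<close>

lemma ainv_conj:
  assumes "aut M U" "aut M S" "x \<in> space M"
  shows "ainv M (ainv M U \<circ> S \<circ> U) x = (ainv M U \<circ> ainv M S \<circ> U) x"
proof -
  have U: "mp_bij M U" "mp_bij M (ainv M U)" and S: "mp_bij M S"
    using aut_imp_mp_bij assms by auto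
  have bU: "bij_betw U (space M) (space M)" and bS: "bij_betw S (space M) (space M)"
    using U S mp_bij_bij_betw by auto
  have bW: "bij_betw (ainv M U \<circ> S \<circ> U) (space M) (space M)"
    by (intro mp_bij_bij_betw mp_bij_comp U S)
  have Ux: "U x \<in> space M" by (rule bij_betw_apply[OF bU assms(3)])
  have y: "ainv M U (ainv M S (U x)) \<in> space M" by (intro ainv_in_space bU bS Ux)
  have "(ainv M U \<circ> S \<circ> U) (ainv M U (ainv M S (U x))) = x"
    using ainv_right[OF bU ainv_in_space[OF bS Ux]] ainv_right[OF bS Ux] ainv_left[OF bU assms(3)]
    by simp
  then have "the_inv_into (space M) (ainv M U \<circ> S \<circ> U) x = ainv M U (ainv M S (U x))"
    by (intro the_inv_into_f_eq[OF _ _ y]) (use bW in \<open>auto simp: bij_betw_def\<close>)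
  then show ?thesis unfolding ainv_def[of M "ainv M U \<circ> S \<circ> U"] by simp
qed

lemma aut_conj:
  assumes "aut M U" "aut M S"
  shows "aut M (ainv M U \<circ> S \<circ> U)"
proof (rule mp_bij_imp_aut)
  show "mp_bij M (ainv M U \<circ> S \<circ> U)" by (intro mp_bij_comp aut_imp_mp_bij assms)
  have "mp_bij M (ainv M U \<circ> ainv M S \<circ> U)" by (intro mp_bij_comp aut_imp_mp_bij assms)
  then show "mp_bij M (ainv M (ainv M U \<circ> S \<circ> U))"
    by (rule mp_bij_cong) (simp add: ainv_conj[OF assms])
qed

lemma image_conj_action: "conj_action M U T g ` A = ainv M U ` T g ` U ` A"
  unfolding conj_action_def by (simp add: image_comp)

lemma image_ainv_conj_action:
  assumes "aut M U" "aut M (T g)" "A \<subseteq> space M"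
  shows "ainv M (conj_action M U T g) ` A = ainv M U ` ainv M (T g) ` U ` A"
proof -
  have "ainv M (conj_action M U T g) ` A = (ainv M U \<circ> ainv M (T g) \<circ> U) ` A"
    unfolding conj_action_def using ainv_conj[OF assms(1,2)] assms(3) by (intro image_cong) auto
  then show ?thesis by (simp add: image_comp)
qed

lemma measure_conj_action_Int:
  assumes "aut M U" "aut M (T g)" "A \<in> sets M" "B \<in> sets M"
  shows "measure M (conj_action M U T g ` A \<inter> B) = measure M (T g ` U ` A \<inter> U ` B)"
proof -
  have U: "mp_bij M U" "mp_bij M (ainv M U)" and S: "mp_bij M (T g)"
    using aut_imp_mp_bij assms by auto
  have "B = ainv M U ` U ` B"
    using ainv_left[OF mp_bij_bij_betw[OF U(1)]] sets.sets_into_space[OF assms(4)]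
    by (force simp: image_iff)
  then have "conj_action M U T g ` A \<inter> B = ainv M U ` (T g ` U ` A) \<inter> ainv M U ` (U ` B)"
    by (simp add: image_conj_action)
  moreover have "T g ` U ` A \<in> sets M" "U ` B \<in> sets M"
    using mp_bij_sets U(1) S assms(3,4) by blast+
  ultimately show ?thesis using mp_bij_measure_Int[OF U(2)] by simp
qed

lemma AE_aut_comp:
  assumes "aut M U" "AE y in M. P y"
  shows "AE x in M. P (U x)"
proof -
  have U: "mp_bij M U" "mp_bij M (ainv M U)" using aut_imp_mp_bij assms by auto
  obtain N where N: "{y \<in> space M. \<not> P y} \<subseteq> N" "N \<in> null_sets M"
    using assms(2) by (auto elim!: AE_E)
  have "ainv M U ` N \<in> null_sets M"
    using N(2) mp_bij_measure[OF U(2)] mp_bij_sets[OF U(2)]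
    by (auto simp: null_sets_def emeasure_eq_measure)
  moreover have "{x \<in> space M. \<not> P (U x)} \<subseteq> ainv M U ` N"
  proof
    fix x assume x: "x \<in> {x \<in> space M. \<not> P (U x)}"
    then have "U x \<in> N" using N(1) bij_betw_apply[OF mp_bij_bij_betw[OF U(1)]] by auto
    moreover have "x = ainv M U (U x)" using ainv_left[OF mp_bij_bij_betw[OF U(1)]] x by auto
    ultimately show "x \<in> ainv M U ` N" by auto
  qed
  ultimately show ?thesis by (rule AE_I')
qed

lemma conj_action_mixing_actions:
  fixes T :: "'g::topological_group_add \<Rightarrow> 'a \<Rightarrow> 'a"
  assumes T: "T \<in> mixing_actions M \<Gamma>" and U: "aut M U"
  shows "conj_action M U T \<in> mixing_actions M \<Gamma>"
proof -
  have act: "is_action M T" and mix: "mixing M \<Gamma> T" using T unfolding mixing_actions_def by auto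
  have autT: "\<And>g. aut M (T g)" using act unfolding is_action_def by auto
  have mU: "mp_bij M U" using aut_imp_mp_bij U by auto
  have conj_Int: "measure M (conj_action M U T g ` A \<inter> B) = measure M (T g ` U ` A \<inter> U ` B)"
    if "A \<in> sets M" "B \<in> sets M" for g A B
    using measure_conj_action_Int[OF U autT that] .
  have "aut M (conj_action M U T g)" for g
    unfolding conj_action_def using aut_conj U autT by auto
  moreover have "AE x in M. conj_action M U T g (conj_action M U T h x) = conj_action M U T (g + h) x"
    for g h
  proof -
    have "AE y in M. T g (T h y) = T (g + h) y" using act by (simp add: is_action_def)
    then have "AE x in M. T g (T h (U x)) = T (g + h) (U x)" by (rule AE_aut_comp[OF U])
    then show ?thesis
    proof (rule AE_mp, intro AE_I2 impI)
      fix x assume "x \<in> space M" and "T g (T h (U x)) = T (g + h) (U x)"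
      moreover have "T h (U x) \<in> space M"
        using bij_betw_apply[OF mp_bij_bij_betw[OF aut_imp_mp_bij(1)[OF autT]]
            bij_betw_apply[OF mp_bij_bij_betw[OF mU] \<open>x \<in> space M\<close>]] .
      ultimately show "conj_action M U T g (conj_action M U T h x) = conj_action M U T (g + h) x"
        unfolding conj_action_def using ainv_right[OF mp_bij_bij_betw[OF mU]] by simp
    qed
  qed
  moreover have "continuous_on UNIV (\<lambda>g. measure M (conj_action M U T g ` A \<inter> B))"
    if "A \<in> sets M" "B \<in> sets M" for A B
    using act mp_bij_sets[OF mU] that unfolding is_action_def conj_Int[OF that] by auto
  moreover have "mixing M \<Gamma> (conj_action M U T)"
    unfolding mixing_def
  proof (intro ballI allI impI)
    fix A B and e :: real assume AB: "A \<in> sets M" "B \<in> sets M" and "e > 0"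
    then obtain C where "compact C"
      "\<forall>g\<in>\<Gamma> - C. \<bar>measure M (T g ` U ` A \<inter> U ` B) - measure M (U ` A) * measure M (U ` B)\<bar> < e"
      using mix mp_bij_sets[OF mU] unfolding mixing_def by meson
    then show "\<exists>C. compact C \<and> (\<forall>g\<in>\<Gamma> - C.
        \<bar>measure M (conj_action M U T g ` A \<inter> B) - measure M A * measure M B\<bar> < e)"
      using conj_Int[OF AB] mp_bij_measure[OF mU] AB by auto
  qed
  ultimately show ?thesis unfolding mixing_actions_def is_action_def by auto
qed

section \<open>Continuity of conjugation\<close>

lemma generating_dense_family_sets: "generating_dense_family M Af \<Longrightarrow> Af k \<in> sets M"
  unfolding generating_dense_family_def by auto

lemma generating_dense_family_approx:
  "generating_dense_family M Af \<Longrightarrow> B \<in> sets M \<Longrightarrow> e > 0 \<Longrightarrow> \<exists>k. mdist B (Af k) < e"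
  unfolding generating_dense_family_def symd_def by (metis sup_commute)

lemma continuous_on_mdist_action:
  fixes T :: "'g::topological_group_add \<Rightarrow> 'a \<Rightarrow> 'a"
  assumes act: "is_action M T" and C: "C \<in> sets M"
  shows "continuous_on UNIV (\<lambda>g. mdist (T g ` C) (T g0 ` C))"
    and "continuous_on UNIV (\<lambda>g. mdist (ainv M (T g) ` C) (ainv M (T g0) ` C))"
proof -
  have T: "mp_bij M (T g)" "mp_bij M (ainv M (T g))" for g
    using act aut_imp_mp_bij unfolding is_action_def by auto
  have cont: "continuous_on UNIV (\<lambda>g. measure M (T g ` A \<inter> B))" if "A \<in> sets M" "B \<in> sets M" for A B
    using act that unfolding is_action_def by auto
  have "mdist (T g ` C) (T g0 ` C) = 2 * measure M C - 2 * measure M (T g ` C \<inter> T g0 ` C)" for g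
    using measure_symd[OF mp_bij_sets[OF T(1) C] mp_bij_sets[OF T(1) C]] mp_bij_measure[OF T(1) C]
    by simp
  then show "continuous_on UNIV (\<lambda>g. mdist (T g ` C) (T g0 ` C))"
    by (simp only:) (intro continuous_intros cont C mp_bij_sets[OF T(1) C])
  define E where "E = ainv M (T g0) ` C"
  have E: "E \<in> sets M" "measure M E = measure M C"
    unfolding E_def using mp_bij_sets mp_bij_measure T(2) C by auto
  \<comment> \<open>apply the measure preserving \<open>T g\<close> to both sets, which cancels \<open>ainv M (T g)\<close>\<close>
  have "mdist (ainv M (T g) ` C) (ainv M (T g0) ` C) = 2 * measure M C - 2 * measure M (T g ` E \<inter> C)"
    for g
  proof -
    have "mdist (ainv M (T g) ` C) (ainv M (T g0) ` C) = mdist (T g ` ainv M (T g) ` C) (T g ` E)"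
      unfolding E_def using mp_bij_measure_symd[OF T(1) mp_bij_sets[OF T(2) C] mp_bij_sets[OF T(2) C]]
      by simp
    also have "T g ` ainv M (T g) ` C = C"
      by (rule image_image_ainv[OF T(1) sets.sets_into_space[OF C]])
    finally show ?thesis
      using measure_symd[OF C mp_bij_sets[OF T(1) E(1)]] mp_bij_measure[OF T(1) E(1)] E(2)
      by (simp add: Int_commute)
  qed
  then show "continuous_on UNIV (\<lambda>g. mdist (ainv M (T g) ` C) (ainv M (T g0) ` C))"
    by (simp only:) (intro continuous_intros cont C E(1))
qed

lemma compact_finite_net_action:
  fixes T :: "'g::topological_group_add \<Rightarrow> 'a \<Rightarrow> 'a"
  assumes Af: "generating_dense_family M Af" and act: "is_action M T"
    and C: "C \<in> sets M" and K: "compact K" and \<eta>: "\<eta> > 0"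
  obtains F where "finite F"
    and "\<And>g. g \<in> K \<Longrightarrow> \<exists>k\<in>F. mdist (T g ` C) (Af k) < \<eta>"
    and "\<And>g. g \<in> K \<Longrightarrow> \<exists>k\<in>F. mdist (ainv M (T g) ` C) (Af k) < \<eta>"
proof -
  have T: "mp_bij M (T g)" "mp_bij M (ainv M (T g))" for g
    using act aut_imp_mp_bij unfolding is_action_def by auto
  have s: "T g ` C \<in> sets M" "ainv M (T g) ` C \<in> sets M" for g
    using mp_bij_sets T C by auto
  have Afs: "Af k \<in> sets M" for k using Af by (rule generating_dense_family_sets)
  define \<phi> where "\<phi> g0 g = mdist (T g ` C) (T g0 ` C) + mdist (ainv M (T g) ` C) (ainv M (T g0) ` C)"
    for g0 g
  have "open {g. \<phi> g0 g < \<eta>/2}" for g0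
    unfolding \<phi>_def by (intro open_Collect_less continuous_intros continuous_on_mdist_action[OF act C])
  moreover have "K \<subseteq> (\<Union>g0\<in>K. {g. \<phi> g0 g < \<eta>/2})"
    using \<eta> by (auto simp: \<phi>_def symd_def)
  ultimately obtain K' where K': "K' \<subseteq> K" "finite K'" "K \<subseteq> (\<Union>g0\<in>K'. {g. \<phi> g0 g < \<eta>/2})"
    using compactE_image[OF K, of K "\<lambda>g0. {g. \<phi> g0 g < \<eta>/2}"] by metis
  have "\<exists>k. mdist (T g0 ` C) (Af k) < \<eta>/2" "\<exists>k. mdist (ainv M (T g0) ` C) (Af k) < \<eta>/2" for g0
    using generating_dense_family_approx[OF Af s(1), of "\<eta>/2"]
      generating_dense_family_approx[OF Af s(2), of "\<eta>/2"] \<eta>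
    by simp_all
  then obtain k1 k2 where k1: "\<And>g0. mdist (T g0 ` C) (Af (k1 g0)) < \<eta>/2"
    and k2: "\<And>g0. mdist (ainv M (T g0) ` C) (Af (k2 g0)) < \<eta>/2"
    by metis
  show ?thesis
  proof
    show "finite (k1 ` K' \<union> k2 ` K')" using K' by auto
  next
    fix g assume "g \<in> K"
    then obtain g0 where g0: "g0 \<in> K'" "\<phi> g0 g < \<eta>/2" using K'(3) by auto
    then have "mdist (T g ` C) (T g0 ` C) < \<eta>/2" "mdist (ainv M (T g) ` C) (ainv M (T g0) ` C) < \<eta>/2"
      unfolding \<phi>_def using measure_nonneg[of M] by (smt (verit))+
    moreover have "mdist (T g ` C) (Af (k1 g0)) \<le> mdist (T g ` C) (T g0 ` C) + mdist (T g0 ` C) (Af (k1 g0))"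
      "mdist (ainv M (T g) ` C) (Af (k2 g0))
         \<le> mdist (ainv M (T g) ` C) (ainv M (T g0) ` C) + mdist (ainv M (T g0) ` C) (Af (k2 g0))"
      using s Afs by (intro measure_symd_triangle; simp)+
    ultimately have "mdist (T g ` C) (Af (k1 g0)) < \<eta>" "mdist (ainv M (T g) ` C) (Af (k2 g0)) < \<eta>"
      using k1[of g0] k2[of g0] by linarith+
    then show "\<exists>k\<in>k1 ` K' \<union> k2 ` K'. mdist (T g ` C) (Af k) < \<eta>"
      "\<exists>k\<in>k1 ` K' \<union> k2 ` K'. mdist (ainv M (T g) ` C) (Af k) < \<eta>"
      using g0(1) by blast+
  qed
qed

lemma mdist_conj_image_le:
  assumes U: "aut M U" and V: "aut M V" and S: "mp_bij M S" and A: "A \<in> sets M" and X: "X \<in> sets M"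
  shows "mdist (ainv M U ` S ` U ` A) (ainv M V ` S ` V ` A)
           \<le> 2 * mdist (S ` U ` A) X + mdist (ainv M U ` X) (ainv M V ` X) + mdist (U ` A) (V ` A)"
proof -
  have mU: "mp_bij M U" "mp_bij M (ainv M U)" and mV: "mp_bij M V" "mp_bij M (ainv M V)"
    using aut_imp_mp_bij U V by auto
  have s: "U ` A \<in> sets M" "V ` A \<in> sets M" "S ` U ` A \<in> sets M" "S ` V ` A \<in> sets M"
    using mp_bij_sets mU(1) mV(1) S A by blast+
  have s': "ainv M U ` S ` U ` A \<in> sets M" "ainv M U ` X \<in> sets M" "ainv M V ` X \<in> sets M"
    "ainv M V ` S ` U ` A \<in> sets M" "ainv M V ` S ` V ` A \<in> sets M"
    using mp_bij_sets mU(2) mV(2) s X by blast+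
  have "mdist (ainv M U ` S ` U ` A) (ainv M V ` S ` V ` A)
      \<le> mdist (ainv M U ` S ` U ` A) (ainv M U ` X) + mdist (ainv M U ` X) (ainv M V ` X)
        + mdist (ainv M V ` X) (ainv M V ` S ` U ` A) + mdist (ainv M V ` S ` U ` A) (ainv M V ` S ` V ` A)"
    using measure_symd_triangle[OF s'(1,2,5)] measure_symd_triangle[OF s'(2,3,5)]
      measure_symd_triangle[OF s'(3,4,5)] by linarith
  also have "\<dots> = 2 * mdist (S ` U ` A) X + mdist (ainv M U ` X) (ainv M V ` X) + mdist (S ` U ` A) (S ` V ` A)"
    using mp_bij_measure_symd[OF mU(2) s(3) X] mp_bij_measure_symd[OF mV(2) X s(3)]
      mp_bij_measure_symd[OF mV(2) s(3,4)] symd_commute[of X "S ` U ` A"] by simp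
  also have "mdist (S ` U ` A) (S ` V ` A) = mdist (U ` A) (V ` A)"
    by (rule mp_bij_measure_symd[OF S s(1,2)])
  finally show ?thesis .
qed

lemma mdist_add_mdist_le_2: "mdist A B + mdist C D \<le> 2"
  using prob_le_1[of "symd A B"] prob_le_1[of "symd C D"] by linarith

lemma weighted_summand_le_dW:
  "(1/2)^k * (mdist (U ` Af k) (V ` Af k) + mdist (ainv M U ` Af k) (ainv M V ` Af k)) \<le> dW M Af U V"
  unfolding dW_def by (rule weighted_halves_le_suminf[of _ 2]) (auto intro: mdist_add_mdist_le_2)

lemma dW_nonneg: "0 \<le> dW M Af U V"
  unfolding dW_def by (rule suminf_weighted_halves_nonneg[of _ 2]) (auto intro: mdist_add_mdist_le_2)

lemma dW_le_4: "dW M Af U V \<le> 4"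
proof -
  have "dW M Af U V \<le> 2 * 2"
    unfolding dW_def by (rule suminf_weighted_halves_le) (auto intro: mdist_add_mdist_le_2)
  then show ?thesis by simp
qed

lemma SUP_dW_nonneg:
  assumes "K \<noteq> {}"
  shows "0 \<le> (SUP g\<in>K. dW M Af (S g) (R g))"
proof -
  obtain g where "g \<in> K" using assms by blast
  then have "dW M Af (S g) (R g) \<le> (SUP g\<in>K. dW M Af (S g) (R g))"
    by (intro cSUP_upper) (auto intro!: bdd_aboveI2 dW_le_4)
  then show ?thesis by (rule order.trans[OF dW_nonneg])
qed

lemma SUP_dW_le_4: "K \<noteq> {} \<Longrightarrow> (SUP g\<in>K. dW M Af (S g) (R g)) \<le> 4"
  by (intro cSUP_least dW_le_4)

lemma dW_small_imp_mdist_small: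
  assumes "\<eta> > 0"
  shows "\<exists>\<delta>>0. \<forall>V. dW M Af U V < \<delta> \<longrightarrow>
           mdist (U ` Af k) (V ` Af k) < \<eta> \<and> mdist (ainv M U ` Af k) (ainv M V ` Af k) < \<eta>"
proof (intro exI[of _ "\<eta> * (1/2)^k"] conjI allI impI)
  show "\<eta> * (1/2)^k > 0" using assms by simp
  fix V assume "dW M Af U V < \<eta> * (1/2)^k"
  then have "(1/2)^k * (mdist (U ` Af k) (V ` Af k) + mdist (ainv M U ` Af k) (ainv M V ` Af k))
      < (1/2)^k * \<eta>"
    using weighted_summand_le_dW[of k U Af V] mult.commute[of \<eta> "(1/2)^k"] by linarith
  then have "mdist (U ` Af k) (V ` Af k) + mdist (ainv M U ` Af k) (ainv M V ` Af k) < \<eta>"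
    by (simp add: mult_less_cancel_left)
  then show "mdist (U ` Af k) (V ` Af k) < \<eta>" "mdist (ainv M U ` Af k) (ainv M V ` Af k) < \<eta>"
    using measure_nonneg[of M] by (smt (verit))+
qed

lemma conj_action_close_uniformly_on_compact:
  fixes T :: "'g::topological_group_add \<Rightarrow> 'a \<Rightarrow> 'a"
  assumes Af: "generating_dense_family M Af" and act: "is_action M T" and U: "aut M U"
    and K: "compact K" and \<eta>: "\<eta> > 0"
  shows "\<exists>\<delta>>0. \<forall>V. aut M V \<and> dW M Af U V < \<delta> \<longrightarrow> (\<forall>g\<in>K.
           mdist (conj_action M U T g ` Af j) (conj_action M V T g ` Af j) < \<eta> \<and>
           mdist (ainv M (conj_action M U T g) ` Af j) (ainv M (conj_action M V T g) ` Af j) < \<eta>)"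
proof -
  have Afs: "Af k \<in> sets M" for k using Af by (rule generating_dense_family_sets)
  have autT: "aut M (T g)" for g using act unfolding is_action_def by auto
  have mpT: "mp_bij M (T g)" for g using aut_imp_mp_bij[OF autT] by auto
  have \<eta>4: "\<eta>/4 > 0" using \<eta> by simp
  obtain F where "finite F"
    and net: "\<And>g. g \<in> K \<Longrightarrow> \<exists>k\<in>F. mdist (T g ` U ` Af j) (Af k) < \<eta>/4"
      "\<And>g. g \<in> K \<Longrightarrow> \<exists>k\<in>F. mdist (ainv M (T g) ` U ` Af j) (Af k) < \<eta>/4"
    using compact_finite_net_action[OF Af act mp_bij_sets[OF aut_imp_mp_bij(1)[OF U] Afs[of j]] K \<eta>4]
    by blast
  have "\<forall>k\<in>insert j F. \<exists>\<delta>>0. \<forall>V. aut M V \<and> dW M Af U V < \<delta> \<longrightarrow>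
      mdist (U ` Af k) (V ` Af k) < \<eta>/4 \<and> mdist (ainv M U ` Af k) (ainv M V ` Af k) < \<eta>/4"
    using dW_small_imp_mdist_small[OF \<eta>4] by blast
  from finite_ball_ex_delta[OF finite.insertI[OF \<open>finite F\<close>] this]
  obtain \<delta> where "\<delta> > 0" and \<delta>: "\<forall>V. aut M V \<and> dW M Af U V < \<delta> \<longrightarrow> (\<forall>k\<in>insert j F.
      mdist (U ` Af k) (V ` Af k) < \<eta>/4 \<and> mdist (ainv M U ` Af k) (ainv M V ` Af k) < \<eta>/4)"
    by blast
  show ?thesis
  proof (intro exI[of _ \<delta>] conjI \<open>\<delta> > 0\<close> allI impI ballI)
    fix V g assume "aut M V \<and> dW M Af U V < \<delta>" and "g \<in> K"
    then have V: "aut M V" and close: "\<And>k. k \<in> insert j F \<Longrightarrow>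
        mdist (U ` Af k) (V ` Af k) < \<eta>/4 \<and> mdist (ainv M U ` Af k) (ainv M V ` Af k) < \<eta>/4"
      using \<delta> by auto
    obtain k1 k2 where k1: "k1 \<in> F" "mdist (T g ` U ` Af j) (Af k1) < \<eta>/4"
      and k2: "k2 \<in> F" "mdist (ainv M (T g) ` U ` Af j) (Af k2) < \<eta>/4"
      using net \<open>g \<in> K\<close> by blast
    have "mdist (ainv M U ` Af k1) (ainv M V ` Af k1) < \<eta>/4"
      "mdist (ainv M U ` Af k2) (ainv M V ` Af k2) < \<eta>/4" "mdist (U ` Af j) (V ` Af j) < \<eta>/4"
      using close k1(1) k2(1) by blast+
    moreover have "mdist (conj_action M U T g ` Af j) (conj_action M V T g ` Af j)
        \<le> 2 * mdist (T g ` U ` Af j) (Af k1) + mdist (ainv M U ` Af k1) (ainv M V ` Af k1)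
          + mdist (U ` Af j) (V ` Af j)"
      unfolding image_conj_action by (intro mdist_conj_image_le U V mpT Afs)
    moreover have "mdist (ainv M (conj_action M U T g) ` Af j) (ainv M (conj_action M V T g) ` Af j)
        \<le> 2 * mdist (ainv M (T g) ` U ` Af j) (Af k2) + mdist (ainv M U ` Af k2) (ainv M V ` Af k2)
          + mdist (U ` Af j) (V ` Af j)"
      unfolding image_ainv_conj_action[OF U autT sets.sets_into_space[OF Afs]]
        image_ainv_conj_action[OF V autT sets.sets_into_space[OF Afs]]
      by (intro mdist_conj_image_le U V aut_imp_mp_bij(2)[OF autT] Afs)
    ultimately show "mdist (conj_action M U T g ` Af j) (conj_action M V T g ` Af j) < \<eta>"
      "mdist (ainv M (conj_action M U T g) ` Af j) (ainv M (conj_action M V T g) ` Af j) < \<eta>"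
      using k1(2) k2(2) by linarith+
  qed
qed

lemma dW_conj_action_small_uniformly_on_compact:
  fixes T :: "'g::topological_group_add \<Rightarrow> 'a \<Rightarrow> 'a"
  assumes Af: "generating_dense_family M Af" and act: "is_action M T" and U: "aut M U"
    and K: "compact K" and \<epsilon>: "\<epsilon> > 0"
  shows "\<exists>\<delta>>0. \<forall>V. aut M V \<and> dW M Af U V < \<delta> \<longrightarrow>
           (\<forall>g\<in>K. dW M Af (conj_action M U T g) (conj_action M V T g) < \<epsilon>)"
proof -
  obtain J where J: "(1/2::real)^J < \<epsilon>/8" using real_arch_pow_inv[of "\<epsilon>/8" "1/2::real"] \<epsilon> by auto
  have "\<forall>j\<in>{..<J}. \<exists>\<delta>>0. \<forall>V. aut M V \<and> dW M Af U V < \<delta> \<longrightarrow> (\<forall>g\<in>K.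
      mdist (conj_action M U T g ` Af j) (conj_action M V T g ` Af j) < \<epsilon>/8 \<and>
      mdist (ainv M (conj_action M U T g) ` Af j) (ainv M (conj_action M V T g) ` Af j) < \<epsilon>/8)"
    using conj_action_close_uniformly_on_compact[OF Af act U K, of "\<epsilon>/8"] \<epsilon> by simp
  from finite_ball_ex_delta[OF finite_lessThan this]
  obtain \<delta> where "\<delta> > 0" and \<delta>: "\<forall>V. aut M V \<and> dW M Af U V < \<delta> \<longrightarrow> (\<forall>j\<in>{..<J}. \<forall>g\<in>K.
      mdist (conj_action M U T g ` Af j) (conj_action M V T g ` Af j) < \<epsilon>/8 \<and>
      mdist (ainv M (conj_action M U T g) ` Af j) (ainv M (conj_action M V T g) ` Af j) < \<epsilon>/8)"
    by blast
  show ?thesis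
  proof (intro exI[of _ \<delta>] conjI \<open>\<delta> > 0\<close> allI impI ballI)
    fix V g assume V: "aut M V \<and> dW M Af U V < \<delta>" and "g \<in> K"
    have "dW M Af (conj_action M U T g) (conj_action M V T g) \<le> 2 * (\<epsilon>/4) + 2 * 2 * (1/2)^J"
      unfolding dW_def
    proof (rule suminf_weighted_halves_le_initial)
      fix j :: nat assume "j < J"
      then have "mdist (conj_action M U T g ` Af j) (conj_action M V T g ` Af j) < \<epsilon>/8"
        "mdist (ainv M (conj_action M U T g) ` Af j) (ainv M (conj_action M V T g) ` Af j) < \<epsilon>/8"
        using \<delta> V \<open>g \<in> K\<close> by auto
      then show "mdist (conj_action M U T g ` Af j) (conj_action M V T g ` Af j) +
          mdist (ainv M (conj_action M U T g) ` Af j) (ainv M (conj_action M V T g) ` Af j) \<le> \<epsilon>/4"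
        by linarith
    qed (use \<epsilon> in \<open>simp_all add: mdist_add_mdist_le_2 add_nonneg_nonneg\<close>)
    then show "dW M Af (conj_action M U T g) (conj_action M V T g) < \<epsilon>"
      using J by linarith
  qed
qed

lemma dG_conj_action_small:
  fixes T :: "'g::topological_group_add \<Rightarrow> 'a \<Rightarrow> 'a"
  assumes Af: "generating_dense_family M Af" and act: "is_action M T" and U: "aut M U"
    and K: "admissible_compacts I K" and \<epsilon>: "\<epsilon> > 0"
  shows "\<exists>\<delta>>0. \<forall>V. aut M V \<and> dW M Af U V < \<delta> \<longrightarrow>
           dG M Af I K (conj_action M U T) (conj_action M V T) < \<epsilon>"
proof -
  have Kc: "compact (K i)" "K i \<noteq> {}" if "i \<in> I" for i
    using K that interior_empty unfolding admissible_compacts_def by auto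
  obtain N where N: "(1/2::real)^N < \<epsilon>/16" using real_arch_pow_inv[of "\<epsilon>/16" "1/2::real"] \<epsilon> by auto
  have fin: "finite {i\<in>I. i < N}" by simp
  have "\<forall>i\<in>{i\<in>I. i < N}. \<exists>\<delta>>0. \<forall>V. aut M V \<and> dW M Af U V < \<delta> \<longrightarrow>
      (\<forall>g\<in>K i. dW M Af (conj_action M U T g) (conj_action M V T g) < \<epsilon>/4)"
    using dW_conj_action_small_uniformly_on_compact[OF Af act U Kc(1), of _ "\<epsilon>/4"] \<epsilon> by simp
  from finite_ball_ex_delta[OF fin this]
  obtain \<delta> where "\<delta> > 0" and \<delta>: "\<forall>V. aut M V \<and> dW M Af U V < \<delta> \<longrightarrow> (\<forall>i\<in>{i\<in>I. i < N}.
      \<forall>g\<in>K i. dW M Af (conj_action M U T g) (conj_action M V T g) < \<epsilon>/4)"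
    by blast
  show ?thesis
  proof (intro exI[of _ \<delta>] conjI \<open>\<delta> > 0\<close> allI impI)
    fix V assume V: "aut M V \<and> dW M Af U V < \<delta>"
    define s where "s i = (SUP g\<in>K i. dW M Af (conj_action M U T g) (conj_action M V T g))" for i
    have s_bounds: "0 \<le> s i" "s i \<le> 4" if "i \<in> I" for i
      unfolding s_def by (intro SUP_dW_nonneg SUP_dW_le_4 Kc(2) that)+
    have "dG M Af I K (conj_action M U T) (conj_action M V T)
        = (\<Sum>i. (1/2)^i * (if i \<in> I then s i else 0))"
      unfolding dG_def s_def by (intro suminf_cong) auto
    also have "\<dots> \<le> 2 * (\<epsilon>/4) + 2 * 4 * (1/2)^N"
    proof (rule suminf_weighted_halves_le_initial)
      fix i :: nat
      show "0 \<le> (if i \<in> I then s i else 0)" "(if i \<in> I then s i else 0) \<le> 4"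
        using s_bounds[of i] by simp_all
      assume "i < N"
      show "(if i \<in> I then s i else 0) \<le> \<epsilon>/4"
      proof (cases "i \<in> I")
        case True
        then have "\<forall>g\<in>K i. dW M Af (conj_action M U T g) (conj_action M V T g) < \<epsilon>/4"
          using \<delta> V \<open>i < N\<close> by blast
        then have "s i \<le> \<epsilon>/4"
          unfolding s_def using Kc(2)[OF True] by (intro cSUP_least) (auto intro: less_imp_le)
        then show ?thesis using True by simp
      next
        case False
        then show ?thesis using \<epsilon> by simp
      qed
    qed (use \<epsilon> in simp)
    also have "\<dots> < \<epsilon>" using N by linarith
    finally show "dG M Af I K (conj_action M U T) (conj_action M V T) < \<epsilon>" .
  qed
qed

lemma aW_conj_action_le_dW:
  fixes T :: "'g::topological_group_add \<Rightarrow> 'a \<Rightarrow> 'a"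
  assumes Af: "range Af \<subseteq> sets M" and act: "is_action M T" and U: "aut M U" and V: "aut M V"
  shows "aW M Af (conj_action M U T g) (conj_action M V T g) \<le> 4 * dW M Af U V"
proof -
  have Afs: "Af k \<in> sets M" for k using Af by auto
  have autT: "aut M (T g)" using act unfolding is_action_def by auto
  have mU: "mp_bij M U" and mV: "mp_bij M V" and mT: "mp_bij M (T g)"
    using aut_imp_mp_bij U V autT by auto
  define a where "a i = mdist (U ` Af i) (V ` Af i)" for i
  define b where "b i = mdist (ainv M U ` Af i) (ainv M V ` Af i)" for i
  have ab: "0 \<le> a i" "a i \<le> 1" "0 \<le> b i" "a i + b i \<le> 2" for i
    unfolding a_def b_def by (simp_all add: mdist_add_mdist_le_2)
  have "\<bar>measure M (conj_action M U T g ` Af i \<inter> Af j) - measure M (conj_action M V T g ` Af i \<inter> Af j)\<bar>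
      \<le> a i + a j" for i j
  proof -
    have "\<bar>measure M (conj_action M U T g ` Af i \<inter> Af j) - measure M (conj_action M V T g ` Af i \<inter> Af j)\<bar>
        = \<bar>measure M (T g ` U ` Af i \<inter> U ` Af j) - measure M (T g ` V ` Af i \<inter> V ` Af j)\<bar>"
      using measure_conj_action_Int[of U T g, OF U autT Afs Afs]
        measure_conj_action_Int[of V T g, OF V autT Afs Afs]
      by simp
    also have "\<dots> \<le> mdist (T g ` U ` Af i) (T g ` V ` Af i) + mdist (U ` Af j) (V ` Af j)"
      by (intro abs_measure_Int_diff_le_symd mp_bij_sets[OF mT] mp_bij_sets[OF mU] mp_bij_sets[OF mV] Afs)
    also have "mdist (T g ` U ` Af i) (T g ` V ` Af i) = a i"
      unfolding a_def by (intro mp_bij_measure_symd mT mp_bij_sets[OF mU] mp_bij_sets[OF mV] Afs)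
    finally show ?thesis unfolding a_def .
  qed
  then have "aW M Af (conj_action M U T g) (conj_action M V T g) \<le> 4 * (\<Sum>i. (1/2)^i * a i)"
    unfolding aW_def by (intro double_suminf_weighted_halves_le ab) simp_all
  also have "(\<Sum>i. (1/2)^i * a i) \<le> dW M Af U V"
    unfolding dW_def a_def[symmetric] b_def[symmetric]
  proof (rule suminf_le)
    show "summable (\<lambda>i. (1/2)^i * a i)" using ab by (intro summable_weighted_halves[of _ 1]) auto
    show "summable (\<lambda>i. (1/2)^i * (a i + b i))"
      using ab by (intro summable_weighted_halves[of _ 2]) auto
  qed (use ab in \<open>simp add: mult_left_mono\<close>)
  finally show ?thesis by simp
qed

lemma leash_conj_action_small:
  fixes T :: "'g::topological_group_add \<Rightarrow> 'a \<Rightarrow> 'a"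
  assumes Af: "generating_dense_family M Af" and act: "is_action M T"
    and K: "admissible_compacts I K" and \<Gamma>: "\<Gamma> \<noteq> {}" and U: "aut M U" and \<epsilon>: "\<epsilon> > 0"
  shows "\<exists>\<delta>>0. \<forall>V. aut M V \<and> dW M Af U V < \<delta> \<longrightarrow>
           leash M Af I K \<Gamma> (conj_action M U T) (conj_action M V T) < \<epsilon>"
proof -
  obtain \<delta> where "\<delta> > 0" and \<delta>: "\<forall>V. aut M V \<and> dW M Af U V < \<delta> \<longrightarrow>
      dG M Af I K (conj_action M U T) (conj_action M V T) < \<epsilon>/2"
    using dG_conj_action_small[OF Af act U K, of "\<epsilon>/2"] \<epsilon> by auto
  show ?thesis
  proof (intro exI[of _ "min \<delta> (\<epsilon>/8)"] conjI allI impI)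
    show "min \<delta> (\<epsilon>/8) > 0" using \<open>\<delta> > 0\<close> \<epsilon> by simp
    fix V assume V: "aut M V \<and> dW M Af U V < min \<delta> (\<epsilon>/8)"
    have "(SUP g\<in>\<Gamma>. aW M Af (conj_action M U T g) (conj_action M V T g)) \<le> 4 * dW M Af U V"
      using Af V generating_dense_family_sets[OF Af]
      by (intro cSUP_least \<Gamma> aW_conj_action_le_dW[OF _ act U]) auto
    then show "leash M Af I K \<Gamma> (conj_action M U T) (conj_action M V T) < \<epsilon>"
      unfolding leash_def using \<delta> V by auto
  qed
qed

end

theorem mainTheorem11:
  fixes M :: "'a measure" and Af :: "nat \<Rightarrow> 'a set"
    and I :: "nat set" and K :: "nat \<Rightarrow> 'g::{topological_group_add, t2_space, first_countable_topology} set"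
    and \<Gamma> :: "'g set" and T :: "'g \<Rightarrow> 'a \<Rightarrow> 'a"
  assumes "prob_space M" and "atomless M" and "generating_dense_family M Af"
    and "locally_compact_space (euclidean :: 'g topology)"
    and "admissible_compacts I K"
    and "\<not> (\<exists>C. compact C \<and> \<Gamma> \<subseteq> C)"
    and "T \<in> mixing_actions M \<Gamma>"
  shows "(\<forall>U. aut M U \<longrightarrow> conj_action M U T \<in> mixing_actions M \<Gamma>) \<and>
         (\<forall>U. aut M U \<longrightarrow> (\<forall>e>0. \<exists>\<delta>>0. \<forall>V. aut M V \<and> dW M Af U V < \<delta> \<longrightarrow>
              leash M Af I K \<Gamma> (conj_action M U T) (conj_action M V T) < e))"
proof -
  interpret prob_space M by (rule assms(1))
  have act: "is_action M T" using assms(7) by (simp add: mixing_actions_def)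
  have "\<Gamma> \<noteq> {}" using assms(6) compact_empty by blast
  then show ?thesis
    using conj_action_mixing_actions[OF assms(7)] leash_conj_action_small[OF assms(3) act assms(5)]
    by blast
qed

end
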